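(* For every integer $n\ge 0$, $$\Phi^{(2)}[aq^n; b, b'; c, c'; x, y] = \sum_{k=0}^n \sum_{i=0}^k \begin{bmatrix} n \\ k \end{bmatrix} \begin{bmatrix} k \\ i \end{bmatrix} \frac{(b; q)_{k-i} (b'; q)_i}{(c; q)_{k-i} (c'; q)_i} q^{2\binom{k}{2}} a^k x^{k-i} y^i\, \Phi^{(2)}[aq^k; bq^{k-i}, b'q^i; cq^{k-i}, c'q^i; xq^i, y]$$ and $$\Phi^{(2)}[aq^{-n}; b, b'; c, c'; x, y] = \sum_{k=0}^n \sum_{i=0}^k \begin{bmatrix} n \\ k \end{bmatrix} \begin{bmatrix} k \\ i \end{bmatrix} \frac{(b; q)_{k-i} (b'; q)_i}{(c; q)_{k-i} (c'; q)_i} q^{\binom{k}{2} - nk} (-a)^k x^{k-i} y^i\, \Phi^{(2)}[a; bq^{k-i}, b'q^i; cq^{k-i}, c'q^i; xq^i, y].$$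
   Context: Let $q$ be a complex number with $0<|q|<1$. For complex $z$ and integer $m\ge 0$, $(z;q)_m=\prod_{j=0}^{m-1}(1-zq^j)$, with $(z;q)_0=1$. For integers $0\le k\le n$, $\begin{bmatrix} n \\ k \end{bmatrix}=\frac{(q;q)_n}{(q;q)_k(q;q)_{n-k}}$ is the $q$-binomial coefficient. The $q$-Appell function $\Phi^{(2)}$ is $$\Phi^{(2)}[a; b, b'; c, c'; x, y] = \sum_{m, n \geq 0} \frac{(a; q)_{m+n} (b; q)_m (b'; q)_n}{(q; q)_m (q; q)_n (c; q)_m (c'; q)_n} x^m y^n.$$ Identities are understood as identities of power series in $x,y$ (formal, or convergent for small $|x|,|y|$), with complex parameters chosen so that no denominator occurring vanishes. *)

theory Defs
  imports "HOL-Analysis.Analysis"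
begin

definition qpoch :: "complex \<Rightarrow> complex \<Rightarrow> nat \<Rightarrow> complex" where
  "qpoch z q m = (\<Prod>j<m. 1 - z * q ^ j)"

definition qbinom :: "complex \<Rightarrow> nat \<Rightarrow> nat \<Rightarrow> complex" where
  "qbinom q n k = qpoch q q n / (qpoch q q k * qpoch q q (n - k))"

definition Phi2 :: "complex \<Rightarrow> complex \<Rightarrow> complex \<Rightarrow> complex \<Rightarrow> complex \<Rightarrow> complex
                     \<Rightarrow> complex \<Rightarrow> complex \<Rightarrow> complex" where
  "Phi2 q a b b' c c' x y =
     (\<Sum>\<^sub>\<infinity>(m, n)\<in>UNIV.
        qpoch a q (m + n) * qpoch b q m * qpoch b' q n
        / (qpoch q q m * qpoch q q n * qpoch c q m * qpoch c' q n) * x ^ m * y ^ n)"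

end

theory Submission
  imports Defs
begin

(* The (m,n) coefficient of Phi2 q alpha b b' c c' x y is C(m,n) * (alpha;q)_(m+n) with C independent
   of alpha, so both identities are statements about expanding (alpha;q)_L.  Write
   [L]_j = (q;q)_L / (q;q)_(L-j)  (qfalling q L j).  Iterating the contiguous relation
     [L]_j (a;q)_(L-j) = [L]_j (aq;q)_(L-j) - a [L]_(j+1) (aq;q)_(L-j-1)
   upwards and downwards gives
     (a q^n;q)_L  = sum_k [n,k] q^(2 (k choose 2)) a^k [L]_k (a q^k;q)_(L-k),
     (a q^-n;q)_L = sum_k [n,k] q^((k choose 2) - nk) (-a)^k [L]_k (a;q)_(L-k).
   For L = m + n the q-Vandermonde identity [m+n]_k = sum_i [k,i] q^(i(m-k+i)) [m]_(k-i) [n]_i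
   distributes [L]_k over the two summation indices, and the (k,i) piece is exactly the (m,n)
   coefficient of the (k,i) series on the right, shifted by (k-i, i).  All these series converge
   absolutely for small |x|, |y|, so the finite combination of shifted series sums to the left side. *)

section \<open>q-Pochhammer symbols and Gaussian binomial coefficients\<close>

lemma qpoch_0 [simp]: "qpoch z q 0 = 1"
  by (simp add: qpoch_def)

lemma qpoch_Suc: "qpoch z q (Suc m) = qpoch z q m * (1 - z * q ^ m)"
  by (simp add: qpoch_def)

lemma qpoch_Suc_left: "qpoch z q (Suc m) = (1 - z) * qpoch (z * q) q m"
  unfolding qpoch_def by (subst prod.lessThan_Suc_shift) (simp add: mult.assoc)

lemma qpoch_add: "qpoch z q (j + m) = qpoch z q j * qpoch (z * q ^ j) q m"
  by (induction m) (simp_all add: qpoch_Suc power_add mult_ac)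

lemma qpoch_mult_qpow_nonzero:
  assumes "\<And>m. qpoch z q m \<noteq> 0"
  shows "qpoch (z * q ^ j) q m \<noteq> 0"
  using assms[of "j + m"] by (simp add: qpoch_add)

lemma norm_mult_qpow_le: "norm q \<le> 1 \<Longrightarrow> norm (z * q ^ j) \<le> norm z"
  for z q :: complex
  by (simp add: norm_mult norm_power mult_left_le power_le_one)

lemma qpoch_q_nonzero:
  assumes "norm q < 1"
  shows "qpoch q q m \<noteq> 0"
proof -
  have "norm (q * q ^ j) < 1" for j
    using assms norm_mult_qpow_le[of q q j] by linarith
  then have "1 - q * q ^ j \<noteq> 0" for j
    by (metis norm_one order.irrefl right_minus_eq)
  then show ?thesis
    by (simp add: qpoch_def)
qed

text \<open>For \<open>k > n\<close>, qbinom takes the junk value \<open>(q;q)\<^sub>n / (q;q)\<^sub>k\<close>, while the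
  Pascal-recursive coefficient vanishes; this is what makes \<open>sum_gauss_binom_Suc\<close> hold without
  boundary terms.\<close>

fun gauss_binom :: "complex \<Rightarrow> nat \<Rightarrow> nat \<Rightarrow> complex" where
  "gauss_binom q 0 k = (if k = 0 then 1 else 0)"
| "gauss_binom q (Suc n) 0 = 1"
| "gauss_binom q (Suc n) (Suc k) = q ^ Suc k * gauss_binom q n (Suc k) + gauss_binom q n k"

lemma gauss_binom_eq_0: "n < k \<Longrightarrow> gauss_binom q n k = 0"
  by (induction q n k rule: gauss_binom.induct) auto

lemma gauss_binom_0_right [simp]: "gauss_binom q n 0 = 1"
  by (cases n) auto

lemma gauss_binom_same [simp]: "gauss_binom q n n = 1"
  by (induction n) (auto simp: gauss_binom_eq_0)

lemma gauss_binom_qpoch: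
  "k \<le> n \<Longrightarrow> gauss_binom q n k * (qpoch q q k * qpoch q q (n - k)) = qpoch q q n"
proof (induction q n k rule: gauss_binom.induct)
  case (3 q n k)
  show ?case
  proof (cases "k = n")
    case True
    then show ?thesis
      by (simp add: gauss_binom_eq_0 qpoch_Suc)
  next
    case False
    then obtain d where d: "n = k + Suc d"
      using "3.prems" by (metis Suc_le_mono add_Suc_right le_neq_implies_less less_imp_Suc_add)
    have IH1: "gauss_binom q n (Suc k) * (qpoch q q (Suc k) * qpoch q q d) = qpoch q q n"
      using "3.IH"(1) d by simp
    have IH2: "gauss_binom q n k * (qpoch q q k * qpoch q q (Suc d)) = qpoch q q n"
      using "3.IH"(2) d by simp
    have "gauss_binom q (Suc n) (Suc k) * (qpoch q q (Suc k) * qpoch q q (Suc n - Suc k))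
        = q ^ Suc k * (gauss_binom q n (Suc k) * (qpoch q q (Suc k) * qpoch q q d)) * (1 - q * q ^ d)
          + gauss_binom q n k * (qpoch q q k * qpoch q q (Suc d)) * (1 - q * q ^ k)"
      using d by (simp add: qpoch_Suc algebra_simps)
    also have "\<dots> = qpoch q q n * (1 - q * q ^ n)"
      unfolding IH1 IH2 using d by (simp add: algebra_simps power_add)
    finally show ?thesis
      by (simp add: qpoch_Suc)
  qed
qed simp_all

lemma qbinom_eq_gauss_binom:
  assumes "norm q < 1" "k \<le> n"
  shows "qbinom q n k = gauss_binom q n k"
  using gauss_binom_qpoch[OF assms(2), of q] qpoch_q_nonzero[OF assms(1)]
  unfolding qbinom_def by (simp add: field_simps)

lemma sum_gauss_binom_Suc:
  "(\<Sum>k\<le>Suc n. gauss_binom q (Suc n) k * f k)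
     = (\<Sum>k\<le>n. q ^ k * gauss_binom q n k * f k) + (\<Sum>k\<le>n. gauss_binom q n k * f (Suc k))"
proof -
  have "(\<Sum>k\<le>n. q ^ k * gauss_binom q n k * f k) = (\<Sum>k\<le>Suc n. q ^ k * gauss_binom q n k * f k)"
    by (simp add: gauss_binom_eq_0)
  also have "\<dots> = f 0 + (\<Sum>k\<le>n. q ^ Suc k * gauss_binom q n (Suc k) * f (Suc k))"
    by (subst sum.atMost_Suc_shift) simp
  finally show ?thesis
    by (subst sum.atMost_Suc_shift) (simp add: algebra_simps sum.distrib)
qed

section \<open>Finite expansions of shifted q-Pochhammer symbols\<close>

definition qfalling :: "complex \<Rightarrow> nat \<Rightarrow> nat \<Rightarrow> complex" where
  "qfalling q M j = (\<Prod>t<j. 1 - q ^ (M - t))"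

lemma qfalling_0 [simp]: "qfalling q M 0 = 1"
  by (simp add: qfalling_def)

lemma qfalling_Suc: "qfalling q M (Suc j) = qfalling q M j * (1 - q ^ (M - j))"
  by (simp add: qfalling_def)

lemma qfalling_eq_0: "M < j \<Longrightarrow> qfalling q M j = 0"
  unfolding qfalling_def by (rule prod_zero) (auto intro: bexI[of _ M])

lemma qfalling_mult_qpoch: "j \<le> M \<Longrightarrow> qfalling q M j * qpoch q q (M - j) = qpoch q q M"
proof (induction j)
  case (Suc j)
  then obtain d where d: "M - j = Suc d" "M - Suc j = d"
    by (metis Suc_diff_Suc Suc_le_lessD diff_Suc_1)
  then show ?case
    using Suc by (simp add: qfalling_Suc qpoch_Suc mult_ac)
qed simp

definition qfalling_qpoch :: "complex \<Rightarrow> nat \<Rightarrow> nat \<Rightarrow> complex \<Rightarrow> complex" where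
  "qfalling_qpoch q L j a = qfalling q L j * qpoch a q (L - j)"

lemma qfalling_qpoch_contiguous:
  "qfalling_qpoch q L j a = qfalling_qpoch q L j (a * q) - a * qfalling_qpoch q L (Suc j) (a * q)"
proof (cases "j < L")
  case True
  then obtain m where m: "L - j = Suc m" "L - Suc j = m"
    by (metis Suc_diff_Suc diff_Suc_1)
  have "qpoch a q (Suc m) = (1 - a) * qpoch (a * q) q m"
    and "qpoch (a * q) q (Suc m) = qpoch (a * q) q m * (1 - a * q * q ^ m)"
    by (rule qpoch_Suc_left, rule qpoch_Suc)
  then show ?thesis
    unfolding qfalling_qpoch_def qfalling_Suc m by (simp only:) (simp add: algebra_simps)
qed (simp add: qfalling_qpoch_def qfalling_Suc)

lemma choose_two_Suc: "(Suc k choose 2) = (k choose 2) + k"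
  by (simp add: numeral_2_eq_2)

lemma qfalling_qpoch_expand_down:
  "qfalling_qpoch q L j a
     = (\<Sum>k\<le>n. gauss_binom q n k * q ^ (k choose 2) * (- a) ^ k * qfalling_qpoch q L (j + k) (a * q ^ n))"
proof (induction n arbitrary: j a)
  case (Suc n)
  define G where "G k = qfalling_qpoch q L (j + k) (a * q ^ Suc n)" for k
  have "qfalling_qpoch q L j a = qfalling_qpoch q L j (a * q) - a * qfalling_qpoch q L (Suc j) (a * q)"
    by (rule qfalling_qpoch_contiguous)
  also have "\<dots> = (\<Sum>k\<le>n. gauss_binom q n k * q ^ (k choose 2) * (- (a * q)) ^ k * G k)
      - a * (\<Sum>k\<le>n. gauss_binom q n k * q ^ (k choose 2) * (- (a * q)) ^ k * G (Suc k))"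
    unfolding Suc.IH[of j "a * q"] Suc.IH[of "Suc j" "a * q"] G_def by (simp add: mult_ac)
  also have "\<dots> = (\<Sum>k\<le>n. q ^ k * gauss_binom q n k * (q ^ (k choose 2) * (- a) ^ k * G k))
      + (\<Sum>k\<le>n. gauss_binom q n k * (q ^ (Suc k choose 2) * (- a) ^ Suc k * G (Suc k)))"
  proof -
    have "(- (a * q)) ^ k = (- a) ^ k * q ^ k" for k
      by (metis minus_mult_left power_mult_distrib)
    then show ?thesis
      by (simp add: sum_distrib_left sum_subtractf[symmetric] sum.distrib[symmetric] choose_two_Suc
          power_add algebra_simps)
  qed
  also have "\<dots> = (\<Sum>k\<le>Suc n. gauss_binom q (Suc n) k * (q ^ (k choose 2) * (- a) ^ k * G k))"
    by (rule sum_gauss_binom_Suc[symmetric])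
  finally show ?case
    by (simp add: G_def mult_ac)
qed (simp add: numeral_2_eq_2)

lemma qfalling_qpoch_expand_up:
  "qfalling_qpoch q L j (a * q ^ (j + n))
     = (\<Sum>k\<le>n. gauss_binom q n k * q ^ (2 * (k choose 2) + j * k) * a ^ k
          * qfalling_qpoch q L (j + k) (a * q ^ (j + k)))"
proof (induction n arbitrary: a)
  case (Suc n)
  define G where "G k = qfalling_qpoch q L (j + k) (a * q ^ (j + k))" for k
  have contiguous: "qfalling_qpoch q L (j + k) (a * q * q ^ (j + k)) = G k + a * q ^ (j + k) * G (Suc k)"
    for k using qfalling_qpoch_contiguous[of q L "j + k" "a * q ^ (j + k)"]
    by (simp add: G_def mult_ac)
  have "qfalling_qpoch q L j (a * q ^ (j + Suc n)) = qfalling_qpoch q L j (a * q * q ^ (j + n))"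
    by (simp add: mult_ac)
  also have "\<dots> = (\<Sum>k\<le>n. gauss_binom q n k * q ^ (2 * (k choose 2) + j * k) * (a * q) ^ k
      * (G k + a * q ^ (j + k) * G (Suc k)))"
    unfolding Suc.IH contiguous ..
  also have "\<dots> = (\<Sum>k\<le>n. q ^ k * gauss_binom q n k * (q ^ (2 * (k choose 2) + j * k) * a ^ k * G k))
      + (\<Sum>k\<le>n. gauss_binom q n k * (q ^ (2 * (Suc k choose 2) + j * Suc k) * a ^ Suc k * G (Suc k)))"
    unfolding sum.distrib[symmetric]
  proof (rule sum.cong[OF refl])
    fix k
    have "q ^ (2 * (Suc k choose 2) + j * Suc k) = q ^ (2 * (k choose 2) + j * k) * q ^ k * q ^ (j + k)"
      by (simp add: choose_two_Suc flip: power_add) (simp add: algebra_simps)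
    then show "gauss_binom q n k * q ^ (2 * (k choose 2) + j * k) * (a * q) ^ k
        * (G k + a * q ^ (j + k) * G (Suc k))
      = q ^ k * gauss_binom q n k * (q ^ (2 * (k choose 2) + j * k) * a ^ k * G k)
        + gauss_binom q n k * (q ^ (2 * (Suc k choose 2) + j * Suc k) * a ^ Suc k * G (Suc k))"
      by (simp only: power_mult_distrib power_Suc) (simp add: algebra_simps)
  qed
  also have "\<dots> = (\<Sum>k\<le>Suc n. gauss_binom q (Suc n) k * (q ^ (2 * (k choose 2) + j * k) * a ^ k * G k))"
    by (rule sum_gauss_binom_Suc[symmetric])
  finally show ?case
    by (simp add: G_def mult_ac)
qed (simp add: numeral_2_eq_2)

lemma qpoch_mult_qpow_expansion:
  "qpoch (a * q ^ n) q L
     = (\<Sum>k\<le>n. gauss_binom q n k * (q ^ (2 * (k choose 2)) * a ^ k) * qfalling q L k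
          * qpoch (a * q ^ k) q (L - k))"
  using qfalling_qpoch_expand_up[of q L 0 a n] by (simp add: qfalling_qpoch_def mult_ac)

lemma qpoch_div_qpow_expansion:
  assumes "q \<noteq> 0"
  shows "qpoch (a / q ^ n) q L
     = (\<Sum>k\<le>n. gauss_binom q n k * (q powi (int (k choose 2) - int n * int k) * (- a) ^ k)
          * qfalling q L k * qpoch a q (L - k))"
proof -
  have coeff: "q ^ (k choose 2) * (- (a / q ^ n)) ^ k = q powi (int (k choose 2) - int n * int k) * (- a) ^ k"
    for k
  proof -
    have "q powi (int (k choose 2) - int n * int k) = q powi int (k choose 2) / q powi int (n * k)"
      using assms by (simp add: power_int_diff)
    also have "\<dots> = q ^ (k choose 2) / (q ^ n) ^ k"
      by (simp only: power_int_of_nat power_mult)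
    finally show ?thesis
      unfolding minus_divide_left power_divide by (simp only: divide_inverse mult_ac)
  qed
  have "qpoch (a / q ^ n) q L = qfalling_qpoch q L 0 (a / q ^ n)"
    by (simp add: qfalling_qpoch_def)
  also have "\<dots> = (\<Sum>k\<le>n. gauss_binom q n k * q ^ (k choose 2) * (- (a / q ^ n)) ^ k
      * qfalling_qpoch q L k (a / q ^ n * q ^ n))"
    using qfalling_qpoch_expand_down[of q L 0 "a / q ^ n" n] by simp
  also have "\<dots> = (\<Sum>k\<le>n. gauss_binom q n k * (q powi (int (k choose 2) - int n * int k) * (- a) ^ k)
          * qfalling q L k * qpoch a q (L - k))"
    using assms by (simp only: coeff[symmetric] qfalling_qpoch_def mult.assoc nonzero_divide_mult_cancel_right) simp
  finally show ?thesis .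
qed

lemma qfalling_vandermonde_step:
  "q ^ (i * (M - j)) * qfalling q M j * qfalling q N i * (1 - q ^ (M + N - (j + i)))
     = q ^ i * (q ^ (i * (M - Suc j)) * qfalling q M (Suc j) * qfalling q N i)
       + q ^ (Suc i * (M - j)) * qfalling q M j * qfalling q N (Suc i)"
proof -
  consider "j < M" "i \<le> N" | "M \<le> j" | "N < i"
    by linarith
  then show ?thesis
  proof cases
    case 1
    obtain m where "M = Suc (j + m)"
      using less_imp_Suc_add[OF \<open>j < M\<close>] by blast
    moreover obtain n where "N = i + n"
      using \<open>i \<le> N\<close> le_iff_add by blast
    ultimately show ?thesis
      by (simp add: qfalling_Suc power_add power_mult_distrib algebra_simps)
  next
    case 2
    then show ?thesis
      by (cases "M = j") (simp_all add: qfalling_Suc qfalling_eq_0)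
  next
    case 3
    then show ?thesis
      by (simp add: qfalling_Suc qfalling_eq_0)
  qed
qed

lemma qfalling_vandermonde:
  "qfalling q (M + N) k
     = (\<Sum>i\<le>k. gauss_binom q k i * (q ^ (i * (M - (k - i))) * qfalling q M (k - i) * qfalling q N i))"
proof (induction k)
  case (Suc k)
  define W where "W j i = q ^ (i * (M - j)) * qfalling q M j * qfalling q N i" for j i
  have step: "W j i * (1 - q ^ (M + N - (j + i))) = q ^ i * W (Suc j) i + W j (Suc i)" for j i
    unfolding W_def by (rule qfalling_vandermonde_step)
  have "qfalling q (M + N) (Suc k) = (\<Sum>i\<le>k. gauss_binom q k i * (W (k - i) i * (1 - q ^ (M + N - k))))"
    unfolding qfalling_Suc Suc.IH W_def sum_distrib_right by (simp only: mult.assoc)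
  also have "\<dots> = (\<Sum>i\<le>k. gauss_binom q k i * (q ^ i * W (Suc (k - i)) i + W (k - i) (Suc i)))"
    by (intro sum.cong refl) (simp add: step[symmetric])
  also have "\<dots> = (\<Sum>i\<le>k. q ^ i * gauss_binom q k i * W (Suc k - i) i)
      + (\<Sum>i\<le>k. gauss_binom q k i * W (Suc k - Suc i) (Suc i))"
    by (simp add: sum.distrib[symmetric] Suc_diff_le algebra_simps)
  also have "\<dots> = (\<Sum>i\<le>Suc k. gauss_binom q (Suc k) i * W (Suc k - i) i)"
    by (rule sum_gauss_binom_Suc[symmetric])
  finally show ?case
    unfolding W_def .
qed simp

section \<open>The expansions coefficientwise\<close>

definition Phi2_term :: "complex \<Rightarrow> complex \<Rightarrow> complex \<Rightarrow> complex \<Rightarrow> complex \<Rightarrow> complex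
    \<Rightarrow> complex \<Rightarrow> complex \<Rightarrow> nat \<times> nat \<Rightarrow> complex" where
  "Phi2_term q a b b' c c' x y = (\<lambda>(m, n).
     qpoch a q (m + n) * qpoch b q m * qpoch b' q n
     / (qpoch q q m * qpoch q q n * qpoch c q m * qpoch c' q n) * x ^ m * y ^ n)"

definition Phi2_coeff :: "complex \<Rightarrow> complex \<Rightarrow> complex \<Rightarrow> complex \<Rightarrow> complex \<Rightarrow> complex
    \<Rightarrow> complex \<Rightarrow> nat \<Rightarrow> nat \<Rightarrow> complex" where
  "Phi2_coeff q b b' c c' x y m n =
     qpoch b q m * qpoch b' q n / (qpoch q q m * qpoch q q n * qpoch c q m * qpoch c' q n) * x ^ m * y ^ n"

lemma Phi2_eq_infsum: "Phi2 q a b b' c c' x y = infsum (Phi2_term q a b b' c c' x y) UNIV"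
  by (simp add: Phi2_def Phi2_term_def)

lemma Phi2_term_eq: "Phi2_term q a b b' c c' x y (m, n) = Phi2_coeff q b b' c c' x y m n * qpoch a q (m + n)"
  by (simp add: Phi2_term_def Phi2_coeff_def)

definition shift_index :: "nat \<Rightarrow> nat \<Rightarrow> (nat \<times> nat \<Rightarrow> 'a::zero) \<Rightarrow> nat \<times> nat \<Rightarrow> 'a" where
  "shift_index u v f = (\<lambda>(m, n). if u \<le> m \<and> v \<le> n then f (m - u, n - v) else 0)"

lemma has_sum_shift_index:
  fixes f :: "nat \<times> nat \<Rightarrow> 'a::{topological_space, comm_monoid_add}"
  assumes "(f has_sum s) UNIV"
  shows "(shift_index u v f has_sum s) UNIV"
proof -
  define h where "h = (\<lambda>(m::nat, n::nat). (m + u, n + v))"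
  have "inj h"
    by (auto simp: h_def inj_on_def)
  moreover have "shift_index u v f \<circ> h = f"
    by (auto simp: h_def shift_index_def fun_eq_iff)
  ultimately have "(shift_index u v f has_sum s) (range h)"
    using assms by (simp add: has_sum_reindex)
  moreover have "shift_index u v f p = 0" if "p \<notin> range h" for p
  proof -
    have "p \<noteq> h (fst p - u, snd p - v)"
      using that by blast
    then have "\<not> (u \<le> fst p \<and> v \<le> snd p)"
      by (auto simp: h_def prod_eq_iff)
    then show ?thesis
      by (auto simp: shift_index_def case_prod_beta)
  qed
  ultimately show ?thesis
    by (rule has_sum_cong_neutral[THEN iffD1, rotated -1]) auto
qed

lemma has_sum_sum:
  fixes f :: "'i \<Rightarrow> 'b \<Rightarrow> 'a::topological_comm_monoid_add"
  assumes "finite I" "\<And>i. i \<in> I \<Longrightarrow> (f i has_sum s i) A"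
  shows "((\<lambda>x. \<Sum>i\<in>I. f i x) has_sum (\<Sum>i\<in>I. s i)) A"
  using assms by (induction I rule: finite_induct) (auto intro: has_sum_add)

lemma shift_index_Phi2_term:
  assumes "norm q < 1" and c: "\<And>m. qpoch c q m \<noteq> 0" and c': "\<And>m. qpoch c' q m \<noteq> 0"
  shows "qpoch b q j * qpoch b' q i / (qpoch c q j * qpoch c' q i) * x ^ j * y ^ i
      * shift_index j i (Phi2_term q a (b * q ^ j) (b' * q ^ i) (c * q ^ j) (c' * q ^ i) (x * q ^ i) y) (M, N)
    = Phi2_coeff q b b' c c' x y M N * (q ^ (i * (M - j)) * qfalling q M j * qfalling q N i)
      * qpoch a q (M + N - (j + i))"
proof (cases "j \<le> M \<and> i \<le> N")
  case True
  then obtain m n where M: "M = j + m" and N: "N = i + n"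
    by (metis le_iff_add)
  have qM: "qpoch q q M = qfalling q M j * qpoch q q m" and qN: "qpoch q q N = qfalling q N i * qpoch q q n"
    using qfalling_mult_qpoch[of j M q] qfalling_mult_qpoch[of i N q] M N by simp_all
  have "qpoch q q m \<noteq> 0" "qpoch q q n \<noteq> 0" "qfalling q M j \<noteq> 0" "qfalling q N i \<noteq> 0"
    using qpoch_q_nonzero[OF assms(1)] qM qN by (metis mult_zero_left mult_zero_right)+
  moreover have "qpoch c q j \<noteq> 0" "qpoch c' q i \<noteq> 0"
    "qpoch (c * q ^ j) q m \<noteq> 0" "qpoch (c' * q ^ i) q n \<noteq> 0"
    using c c' by (simp_all add: qpoch_mult_qpow_nonzero)
  moreover have "qpoch z q M = qpoch z q j * qpoch (z * q ^ j) q m"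
    and "qpoch z q N = qpoch z q i * qpoch (z * q ^ i) q n" for z
    using M N qpoch_add by blast+
  moreover have "M - j = m" "N - i = n" "M + N - (j + i) = m + n" "x ^ M = x ^ j * x ^ m" "y ^ N = y ^ i * y ^ n"
    using M N by (simp_all add: power_add)
  ultimately show ?thesis
    using True unfolding Phi2_coeff_def Phi2_term_def shift_index_def qM qN
    by (simp add: power_mult_distrib power_mult field_simps)
next
  case False
  then show ?thesis
    by (auto simp: shift_index_def not_le qfalling_eq_0)
qed

lemma Phi2_term_expansion:
  assumes q: "norm q < 1" and c: "\<And>m. qpoch c q m \<noteq> 0" and c': "\<And>m. qpoch c' q m \<noteq> 0"
    and expansion: "\<And>L. (\<Sum>k\<le>n. gauss_binom q n k * g k * qfalling q L k * qpoch (A k) q (L - k))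
                        = qpoch \<alpha> q L"
  shows "(\<Sum>k\<le>n. \<Sum>i\<le>k. qbinom q n k * qbinom q k i
          * (qpoch b q (k - i) * qpoch b' q i) / (qpoch c q (k - i) * qpoch c' q i)
          * g k * x ^ (k - i) * y ^ i
          * shift_index (k - i) i
              (Phi2_term q (A k) (b * q ^ (k - i)) (b' * q ^ i) (c * q ^ (k - i)) (c' * q ^ i) (x * q ^ i) y)
              (M, N))
    = Phi2_term q \<alpha> b b' c c' x y (M, N)"
  (is "(\<Sum>k\<le>n. \<Sum>i\<le>k. ?term k i) = _")
proof -
  let ?C = "Phi2_coeff q b b' c c' x y M N"
  define W where "W k i = q ^ (i * (M - (k - i))) * qfalling q M (k - i) * qfalling q N i" for k i
  have "?term k i = gauss_binom q n k * g k * ?C * qpoch (A k) q (M + N - k) * (gauss_binom q k i * W k i)"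
    if "k \<le> n" "i \<le> k" for k i
    using that shift_index_Phi2_term[OF q c c', of b "k - i" b' i x y "A k" M N]
    by (simp add: qbinom_eq_gauss_binom[OF q] W_def divide_inverse mult_ac)
  then have "(\<Sum>k\<le>n. \<Sum>i\<le>k. ?term k i)
      = (\<Sum>k\<le>n. gauss_binom q n k * g k * ?C * qpoch (A k) q (M + N - k) * (\<Sum>i\<le>k. gauss_binom q k i * W k i))"
    by (simp add: sum_distrib_left)
  also have "\<dots> = (\<Sum>k\<le>n. gauss_binom q n k * g k * qfalling q (M + N) k * qpoch (A k) q (M + N - k)) * ?C"
    unfolding W_def qfalling_vandermonde[symmetric] by (simp add: sum_distrib_left mult_ac)
  finally show ?thesis
    by (simp add: expansion Phi2_term_eq)
qed

lemma Phi2_expansion: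
  assumes q: "norm q < 1" and c: "\<And>m. qpoch c q m \<noteq> 0" and c': "\<And>m. qpoch c' q m \<noteq> 0"
    and expansion: "\<And>L. (\<Sum>k\<le>n. gauss_binom q n k * g k * qfalling q L k * qpoch (A k) q (L - k))
                        = qpoch \<alpha> q L"
    and summable: "\<And>k i. k \<le> n \<Longrightarrow> i \<le> k \<Longrightarrow>
       Phi2_term q (A k) (b * q ^ (k - i)) (b' * q ^ i) (c * q ^ (k - i)) (c' * q ^ i) (x * q ^ i) y
         summable_on UNIV"
  shows "Phi2 q \<alpha> b b' c c' x y =
       (\<Sum>k\<le>n. \<Sum>i\<le>k. qbinom q n k * qbinom q k i
          * (qpoch b q (k - i) * qpoch b' q i) / (qpoch c q (k - i) * qpoch c' q i)
          * g k * x ^ (k - i) * y ^ i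
          * Phi2 q (A k) (b * q ^ (k - i)) (b' * q ^ i) (c * q ^ (k - i)) (c' * q ^ i) (x * q ^ i) y)"
  (is "_ = (\<Sum>k\<le>n. \<Sum>i\<le>k. ?w k i * _)")
proof -
  define F where "F k i = Phi2_term q (A k) (b * q ^ (k - i)) (b' * q ^ i) (c * q ^ (k - i)) (c' * q ^ i) (x * q ^ i) y"
    for k i
  have "((\<lambda>p. ?w k i * shift_index (k - i) i (F k i) p) has_sum (?w k i * infsum (F k i) UNIV)) UNIV"
    if "k \<le> n" "i \<le> k" for k i
    using summable[OF that] by (intro has_sum_cmult_right has_sum_shift_index) (simp add: F_def)
  then have "((\<lambda>p. \<Sum>k\<le>n. \<Sum>i\<le>k. ?w k i * shift_index (k - i) i (F k i) p)
      has_sum (\<Sum>k\<le>n. \<Sum>i\<le>k. ?w k i * infsum (F k i) UNIV)) UNIV"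
    by (intro has_sum_sum) auto
  moreover have "(\<lambda>p. \<Sum>k\<le>n. \<Sum>i\<le>k. ?w k i * shift_index (k - i) i (F k i) p) = Phi2_term q \<alpha> b b' c c' x y"
    using Phi2_term_expansion[OF q c c' expansion] by (auto simp: fun_eq_iff F_def)
  ultimately show ?thesis
    by (simp add: Phi2_eq_infsum infsumI F_def)
qed

section \<open>Convergence\<close>

lemma norm_qpoch_le:
  assumes "norm q \<le> 1"
  shows "norm (qpoch z q m) \<le> (1 + norm z) ^ m"
proof -
  have "norm (1 - z * q ^ j) \<le> 1 + norm z" for j
    using norm_triangle_ineq4[of 1 "z * q ^ j"] norm_mult_qpow_le[OF assms, of z j] by simp
  then have "(\<Prod>j<m. norm (1 - z * q ^ j)) \<le> (\<Prod>j<m. 1 + norm z)"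
    by (intro prod_mono) simp
  then show ?thesis
    unfolding qpoch_def using norm_prod_le order_trans by fastforce
qed

lemma norm_qpoch_ge:
  assumes q: "norm q < 1" and nonzero: "\<And>m. qpoch z q m \<noteq> 0"
  obtains \<delta> where "\<delta> > 0" "\<And>m. \<delta> * (1 / 2) ^ m \<le> norm (qpoch z q m)"
proof -
  have "(\<lambda>j. norm z * norm q ^ j) \<longlonglongrightarrow> 0"
    using tendsto_mult_right_zero[OF LIMSEQ_power_zero[of "norm q"]] q by simp
  then have "eventually (\<lambda>j. norm z * norm q ^ j < 1 / 2) sequentially"
    by (rule order_tendstoD(2)) simp
  then obtain J where J: "\<And>j. j \<ge> J \<Longrightarrow> norm z * norm q ^ j < 1 / 2"
    unfolding eventually_sequentially by blast
  define \<delta> where "\<delta> = Min ((\<lambda>m. norm (qpoch z q m)) ` {..J})"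
  have "\<delta> > 0"
    unfolding \<delta>_def using nonzero by (subst Min_gr_iff) auto
  have le_initial: "\<delta> \<le> norm (qpoch z q m)" if "m \<le> J" for m
    unfolding \<delta>_def using that by (intro Min_le) auto
  have "\<delta> * (1 / 2) ^ m \<le> norm (qpoch z q m)" for m
  proof (induction m)
    case (Suc m)
    show ?case
    proof (cases "Suc m \<le> J")
      case True
      have "\<delta> * (1 / 2) ^ Suc m \<le> \<delta>"
        using \<open>\<delta> > 0\<close> by (intro mult_left_le power_le_one) auto
      then show ?thesis
        using le_initial[OF True] by linarith
    next
      case False
      then have "1 / 2 \<le> norm (1 - z * q ^ m)"
        using J[of m] norm_triangle_ineq2[of 1 "z * q ^ m"] by (simp add: norm_mult norm_power)
      then have "\<delta> * (1 / 2) ^ m * (1 / 2) \<le> norm (qpoch z q m) * norm (1 - z * q ^ m)"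
        using Suc.IH \<open>\<delta> > 0\<close> by (intro mult_mono) auto
      then show ?thesis
        by (simp add: qpoch_Suc norm_mult)
    qed
  qed (use le_initial[of 0] in simp)
  then show ?thesis
    using \<open>\<delta> > 0\<close> that by blast
qed

lemma summable_on_geometric_pair:
  fixes u v :: real
  assumes "0 \<le> u" "u < 1" "0 \<le> v" "v < 1"
  shows "(\<lambda>(m, n). u ^ m * v ^ n) summable_on UNIV"
proof -
  have geometric: "((\<lambda>n. w ^ n) has_sum (1 / (1 - w))) UNIV" if "0 \<le> w" "w < 1" for w :: real
    using that by (intro sums_nonneg_imp_has_sum geometric_sums) auto
  have rows: "((\<lambda>n. u ^ m * v ^ n) has_sum (u ^ m * (1 / (1 - v)))) UNIV" for m
    using assms by (intro has_sum_cmult_right geometric) auto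
  have columns: "(\<lambda>m. u ^ m * (1 / (1 - v))) summable_on UNIV"
    using assms by (intro summable_on_cmult_left has_sum_imp_summable[OF geometric]) auto
  have "(\<lambda>(m, n). u ^ m * v ^ n) summable_on Sigma UNIV (\<lambda>_. UNIV)"
    by (rule summable_on_SigmaI[OF _ columns]) (use rows assms in auto)
  then show ?thesis
    by simp
qed

lemma norm_Phi2_term_le:
  assumes q: "norm q \<le> 1" and \<delta>: "\<delta>q > 0" "\<delta>c > 0" "\<delta>c' > 0"
    and lower: "\<And>m. \<delta>q * (1 / 2) ^ m \<le> norm (qpoch q q m)" "\<And>m. \<delta>c * (1 / 2) ^ m \<le> norm (qpoch c q m)"
      "\<And>m. \<delta>c' * (1 / 2) ^ m \<le> norm (qpoch c' q m)"
  shows "norm (Phi2_term q a b b' c c' x y (m, n))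
    \<le> (4 * (1 + norm a) * (1 + norm b) * norm x) ^ m * (4 * (1 + norm a) * (1 + norm b') * norm y) ^ n
      / (\<delta>q * \<delta>q * \<delta>c * \<delta>c')"
proof -
  define A B B' where "A = 1 + norm a" and "B = 1 + norm b" and "B' = 1 + norm b'"
  have num: "norm (qpoch a q (m + n)) * norm (qpoch b q m) * norm (qpoch b' q n) \<le> A ^ (m + n) * B ^ m * B' ^ n"
    unfolding A_def B_def B'_def using q by (intro mult_mono norm_qpoch_le) auto
  have "\<delta>q * \<delta>q * \<delta>c * \<delta>c' * ((1 / 4) ^ m * (1 / 4) ^ n)
      = \<delta>q * (1 / 2) ^ m * (\<delta>q * (1 / 2) ^ n) * (\<delta>c * (1 / 2) ^ m) * (\<delta>c' * (1 / 2) ^ n)"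
    by (simp add: mult_ac flip: power_mult_distrib)
  also have "\<dots> \<le> norm (qpoch q q m) * norm (qpoch q q n) * norm (qpoch c q m) * norm (qpoch c' q n)"
    using \<delta> by (intro mult_mono lower) auto
  finally have den: "\<delta>q * \<delta>q * \<delta>c * \<delta>c' * ((1 / 4) ^ m * (1 / 4) ^ n)
      \<le> norm (qpoch q q m) * norm (qpoch q q n) * norm (qpoch c q m) * norm (qpoch c' q n)" .
  have "norm (Phi2_term q a b b' c c' x y (m, n))
      \<le> A ^ (m + n) * B ^ m * B' ^ n / (\<delta>q * \<delta>q * \<delta>c * \<delta>c' * ((1 / 4) ^ m * (1 / 4) ^ n))
        * norm x ^ m * norm y ^ n"
    unfolding Phi2_term_def prod.case norm_mult norm_divide norm_power
    using num den \<delta> by (intro mult_right_mono frac_le) (auto simp: A_def B_def B'_def)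
  also have "\<dots> = (4 * A * B * norm x) ^ m * (4 * A * B' * norm y) ^ n / (\<delta>q * \<delta>q * \<delta>c * \<delta>c')"
    by (simp add: power_add power_mult_distrib field_simps)
  finally show ?thesis
    by (simp only: A_def B_def B'_def)
qed

text \<open>The radius does not depend on \<open>c, c'\<close>, so a single radius serves all the shifted
  series of the theorem.\<close>

lemma Phi2_term_summable:
  assumes q: "norm q < 1" and c: "\<And>m. qpoch c q m \<noteq> 0" and c': "\<And>m. qpoch c' q m \<noteq> 0"
    and x: "8 * (1 + norm a) * (1 + norm b) * (1 + norm b') * norm x \<le> 1"
    and y: "8 * (1 + norm a) * (1 + norm b) * (1 + norm b') * norm y \<le> 1"
  shows "Phi2_term q a b b' c c' x y summable_on UNIV"
proof -
  obtain \<delta>q \<delta>c \<delta>c' where \<delta>: "\<delta>q > 0" "\<delta>c > 0" "\<delta>c' > 0"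
    and lower: "\<And>m. \<delta>q * (1 / 2) ^ m \<le> norm (qpoch q q m)" "\<And>m. \<delta>c * (1 / 2) ^ m \<le> norm (qpoch c q m)"
      "\<And>m. \<delta>c' * (1 / 2) ^ m \<le> norm (qpoch c' q m)"
    using norm_qpoch_ge[OF q qpoch_q_nonzero[OF q]] norm_qpoch_ge[OF q c] norm_qpoch_ge[OF q c']
    by metis
  define A B B' where "A = 1 + norm a" and "B = 1 + norm b" and "B' = 1 + norm b'"
  define u v where "u = 4 * A * B * norm x" and "v = 4 * A * B' * norm y"
  have ge1: "A \<ge> 1" "B \<ge> 1" "B' \<ge> 1"
    by (simp_all add: A_def B_def B'_def)
  have "u * B' * 2 = 8 * A * B * B' * norm x" "v * B * 2 = 8 * A * B * B' * norm y"
    by (simp_all add: u_def v_def algebra_simps)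
  moreover have "8 * A * B * B' * norm x \<le> 1" "8 * A * B * B' * norm y \<le> 1"
    unfolding A_def B_def B'_def by (fact x, fact y)
  moreover have "0 \<le> u" "0 \<le> v" "u \<le> u * B'" "v \<le> v * B"
    using ge1 mult_left_mono[of 1 B' u] mult_left_mono[of 1 B v] by (simp_all add: u_def v_def)
  ultimately have u: "0 \<le> u" "u < 1" and v: "0 \<le> v" "v < 1"
    by linarith+
  have "(\<lambda>p. (case p of (m, n) \<Rightarrow> u ^ m * v ^ n) * inverse (\<delta>q * \<delta>q * \<delta>c * \<delta>c')) summable_on UNIV"
    by (intro summable_on_cmult_left summable_on_geometric_pair u v)
  then have "(\<lambda>p. norm (Phi2_term q a b b' c c' x y p)) summable_on UNIV"
    by (rule Infinite_Sum.abs_summable_on_comparison_test')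
      (use norm_Phi2_term_le[OF _ \<delta> lower] q in \<open>auto simp: u_def v_def A_def B_def B'_def divide_inverse\<close>)
  then show ?thesis
    by (simp add: summable_on_iff_abs_summable_on_complex)
qed

lemma Phi2_term_shifted_summable:
  assumes q: "norm q < 1" and c: "\<And>m. qpoch c q m \<noteq> 0" and c': "\<And>m. qpoch c' q m \<noteq> 0"
    and "norm \<alpha> \<le> norm a"
    and x: "8 * (1 + norm a) * (1 + norm b) * (1 + norm b') * norm x \<le> 1"
    and y: "8 * (1 + norm a) * (1 + norm b) * (1 + norm b') * norm y \<le> 1"
  shows "Phi2_term q \<alpha> (b * q ^ j) (b' * q ^ i) (c * q ^ j) (c' * q ^ i) (x * q ^ i) y summable_on UNIV"
proof (rule Phi2_term_summable)
  have le: "norm (z * q ^ k) \<le> norm z" for z k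
    using q by (simp add: norm_mult_qpow_le)
  have bound: "8 * (1 + norm \<alpha>) * (1 + norm (b * q ^ j)) * (1 + norm (b' * q ^ i))
      \<le> 8 * (1 + norm a) * (1 + norm b) * (1 + norm b')"
    using le \<open>norm \<alpha> \<le> norm a\<close> by (intro mult_mono add_left_mono) auto
  show "8 * (1 + norm \<alpha>) * (1 + norm (b * q ^ j)) * (1 + norm (b' * q ^ i)) * norm (x * q ^ i) \<le> 1"
    by (rule order_trans[OF mult_mono[OF bound le] x]) auto
  show "8 * (1 + norm \<alpha>) * (1 + norm (b * q ^ j)) * (1 + norm (b' * q ^ i)) * norm y \<le> 1"
    by (rule order_trans[OF mult_right_mono[OF bound] y]) auto
qed (use q c c' in \<open>simp_all add: qpoch_mult_qpow_nonzero\<close>)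

theorem theorem7:
  fixes q a b b' c c' :: complex and n :: nat
  assumes "0 < norm q" and "norm q < 1"
    and "\<And>m. qpoch c q m \<noteq> 0" and "\<And>m. qpoch c' q m \<noteq> 0"
  shows "\<exists>r>0. \<forall>x y. norm x < r \<and> norm y < r \<longrightarrow>
     Phi2 q (a * q ^ n) b b' c c' x y =
       (\<Sum>k\<le>n. \<Sum>i\<le>k. qbinom q n k * qbinom q k i
          * (qpoch b q (k - i) * qpoch b' q i) / (qpoch c q (k - i) * qpoch c' q i)
          * q ^ (2 * (k choose 2)) * a ^ k * x ^ (k - i) * y ^ i
          * Phi2 q (a * q ^ k) (b * q ^ (k - i)) (b' * q ^ i) (c * q ^ (k - i)) (c' * q ^ i)
                 (x * q ^ i) y)
     \<and> Phi2 q (a / q ^ n) b b' c c' x y =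
       (\<Sum>k\<le>n. \<Sum>i\<le>k. qbinom q n k * qbinom q k i
          * (qpoch b q (k - i) * qpoch b' q i) / (qpoch c q (k - i) * qpoch c' q i)
          * q powi (int (k choose 2) - int n * int k) * (- a) ^ k * x ^ (k - i) * y ^ i
          * Phi2 q a (b * q ^ (k - i)) (b' * q ^ i) (c * q ^ (k - i)) (c' * q ^ i)
                 (x * q ^ i) y)"
proof -
  note q = assms(2) and c = assms(3) and c' = assms(4)
  have "q \<noteq> 0"
    using assms(1) by auto
  define r where "r = 1 / (8 * (1 + norm a) * (1 + norm b) * (1 + norm b'))"
  have "r > 0"
    by (simp add: r_def add_pos_nonneg)
  have small: "8 * (1 + norm a) * (1 + norm b) * (1 + norm b') * norm z \<le> 1" if "norm z < r" for z
    using that by (simp add: r_def field_simps add_pos_nonneg)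
  txt \<open>Regroup the coefficients of the two identities into the single factor \<open>g k\<close> of
    \<open>Phi2_expansion\<close>.\<close>
  show ?thesis
    unfolding mult.assoc[of _ "q ^ _" "a ^ _"] mult.assoc[of _ "q powi _" "(- a) ^ _"]
    using \<open>r > 0\<close> q
    by (intro exI[of _ r] conjI allI impI
        Phi2_expansion[OF q c c' qpoch_mult_qpow_expansion[symmetric]]
        Phi2_expansion[OF q c c' qpoch_div_qpow_expansion[OF \<open>q \<noteq> 0\<close>, symmetric]]
        Phi2_term_shifted_summable[OF q c c' _ small small])
       (auto simp: norm_mult_qpow_le)
qed

end
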